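(* Consider the parametric constraint system $g(p,x)\in C$ under the standing assumptions at $(\bar p,\bar x)\in\operatorname{gph}\Gamma$, let $\zeta:P\to\mathbb{R}$ be continuous at $\bar p$ and $D:=D^{\mathrm{Im}}_{p,\zeta}g(\bar p,\bar x)$. Assume that for every $v\in D$ and every $t_k\downarrow0$ there is $u\in\mathbb{R}^n$ with $\liminf_{k\to\infty}\operatorname{dist}(g(\bar p,\bar x)+t_k(v+\nabla_xg(\bar p,\bar x)u);C)/t_k=0$, and that for every $(v,u)\in D\times\mathbb{R}^n$, $(v,u)\ne(0,0)$, with $v+\nabla_xg(\bar p,\bar x)u\in T_C(g(\bar p,\bar x))$ the implication $$\big[\lambda\in N_C\big(g(\bar p,\bar x);v+\nabla_xg(\bar p,\bar x)u\big),\ \nabla_xg(\bar p,\bar x)^T\lambda=0\big]\Longrightarrow\lambda=0$$ holds. Then the system enjoys Robinson stability at $(\bar p,\bar x)$.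
   Context: $P$ is a topological space, $C\subset\mathbb{R}^l$ closed, $g:P\times\mathbb{R}^n\to\mathbb{R}^l$, $\Gamma(p)=\{x:g(p,x)\in C\}$. Standing assumptions: there are neighborhoods $U$ of $\bar x$ and $V$ of $\bar p$ such that for each $p\in V$ the map $g(p,\cdot)$ is continuously differentiable on $U$, and $g$, $\nabla_xg$ are continuous at $(\bar p,\bar x)$. Robinson stability at $(\bar p,\bar x)$: there exist $\kappa\ge0$ and neighborhoods $U$ of $\bar x$, $V$ of $\bar p$ with $\operatorname{dist}(x;\Gamma(p))\le\kappa\operatorname{dist}(g(p,x);C)$ for all $(p,x)\in V\times U$. Image derivative $D^{\mathrm{Im}}_{p,\zeta}g(\bar p,\bar x)$: the smallest closed cone containing $0$ and all $v$ for which there is a sequence $p_k\in P$ with $0<\|g(p_k,\bar x)-g(\bar p,\bar x)\|<1/k$, $\|\nabla_xg(p_k,\bar x)-\nabla_xg(\bar p,\bar x)\|<1/k$, $|\zeta(p_k)-\zeta(\bar p)|<1/k$, and $v=\lim_k(g(p_k,\bar x)-g(\bar p,\bar x))/\|g(p_k,\bar x)-g(\bar p,\bar x)\|$. $T_C$ is the contingent cone; $N_C(\bar z;w)=\{v:\exists t_k\downarrow0,w_k\to w,v_k\to v,\ \bar z+t_kw_k\in C,\ v_k\in\widehat N_C(\bar z+t_kw_k)\}$ is the directional limiting normal cone, $\widehat N_C$ the regular normal cone. *)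

theory Defs
  imports "HOL-Analysis.Analysis"
begin

definition pjac :: "('p \<Rightarrow> real^'n \<Rightarrow> real^'l) \<Rightarrow> 'p \<Rightarrow> real^'n \<Rightarrow> real^'n^'l" where
  "pjac g p x = jacobian (g p) (at x)"

definition Gam :: "('p \<Rightarrow> real^'n \<Rightarrow> real^'l) \<Rightarrow> (real^'l) set \<Rightarrow> 'p \<Rightarrow> (real^'n) set" where
  "Gam g C p = {x. g p x \<in> C}"

definition standing_assumptions ::
  "('p::topological_space \<Rightarrow> real^'n \<Rightarrow> real^'l) \<Rightarrow> 'p \<Rightarrow> real^'n \<Rightarrow> bool" where
  "standing_assumptions g pb xb \<longleftrightarrow>
     (\<exists>U V. open U \<and> xb \<in> U \<and> open V \<and> pb \<in> V \<and>
        (\<forall>p\<in>V. (\<forall>x\<in>U. g p differentiable (at x)) \<and> continuous_on U (\<lambda>x. pjac g p x))) \<and>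
     ((\<lambda>(p, x). g p x) \<longlongrightarrow> g pb xb) (at (pb, xb)) \<and>
     ((\<lambda>(p, x). pjac g p x) \<longlongrightarrow> pjac g pb xb) (at (pb, xb))"

text \<open>Robinson stability at (pb, xb). Distance to the empty set is +infinity in the paper,
  hence we require Gamma(p) to be nonempty (Isabelle's infdist to the empty set is 0).\<close>
definition robinson_stable ::
  "('p::topological_space \<Rightarrow> real^'n \<Rightarrow> real^'l) \<Rightarrow> (real^'l) set \<Rightarrow> 'p \<Rightarrow> real^'n \<Rightarrow> bool" where
  "robinson_stable g C pb xb \<longleftrightarrow>
     (\<exists>\<kappa>\<ge>0. \<exists>U V. open U \<and> xb \<in> U \<and> open V \<and> pb \<in> V \<and>
        (\<forall>p\<in>V. \<forall>x\<in>U. Gam g C p \<noteq> {} \<and>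
            infdist x (Gam g C p) \<le> \<kappa> * infdist (g p x) C))"

definition image_deriv_gen ::
  "('p \<Rightarrow> real^'n \<Rightarrow> real^'l) \<Rightarrow> ('p \<Rightarrow> real) \<Rightarrow> 'p \<Rightarrow> real^'n \<Rightarrow> (real^'l) set" where
  "image_deriv_gen g \<zeta> pb xb = {v. \<exists>pk :: nat \<Rightarrow> 'p.
      (\<forall>k. g (pk k) differentiable (at xb) \<and>
           0 < norm (g (pk k) xb - g pb xb) \<and>
           norm (g (pk k) xb - g pb xb) < 1 / real (Suc k) \<and>
           norm (pjac g (pk k) xb - pjac g pb xb) < 1 / real (Suc k) \<and>
           \<bar>\<zeta> (pk k) - \<zeta> pb\<bar> < 1 / real (Suc k)) \<and>
      ((\<lambda>k. (1 / norm (g (pk k) xb - g pb xb)) *\<^sub>R (g (pk k) xb - g pb xb)) \<longlonglongrightarrow> v)}"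

definition image_deriv ::
  "('p \<Rightarrow> real^'n \<Rightarrow> real^'l) \<Rightarrow> ('p \<Rightarrow> real) \<Rightarrow> 'p \<Rightarrow> real^'n \<Rightarrow> (real^'l) set" where
  "image_deriv g \<zeta> pb xb =
     \<Inter>{K. closed K \<and> cone K \<and> 0 \<in> K \<and> image_deriv_gen g \<zeta> pb xb \<subseteq> K}"

definition tangent_cone :: "'a::real_normed_vector set \<Rightarrow> 'a \<Rightarrow> 'a set" where
  "tangent_cone C z = {w. \<exists>t wk. (\<forall>k. 0 < t k) \<and> t \<longlonglongrightarrow> 0 \<and> wk \<longlonglongrightarrow> w \<and>
                            (\<forall>k. z + t k *\<^sub>R wk k \<in> C)}"

definition regular_normal_cone :: "'a::real_inner set \<Rightarrow> 'a \<Rightarrow> 'a set" where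
  "regular_normal_cone C z = {v. z \<in> C \<and>
     (\<forall>\<epsilon>>0. \<exists>\<delta>>0. \<forall>z'\<in>C. norm (z' - z) < \<delta> \<longrightarrow> v \<bullet> (z' - z) \<le> \<epsilon> * norm (z' - z))}"

definition dir_normal_cone :: "'a::real_inner set \<Rightarrow> 'a \<Rightarrow> 'a \<Rightarrow> 'a set" where
  "dir_normal_cone C z w = {v. \<exists>t wk vk. (\<forall>k. 0 < t k) \<and> t \<longlonglongrightarrow> 0 \<and> wk \<longlonglongrightarrow> w \<and> vk \<longlonglongrightarrow> v \<and>
      (\<forall>k. z + t k *\<^sub>R wk k \<in> C \<and> vk k \<in> regular_normal_cone C (z + t k *\<^sub>R wk k))}"

end

theory Submission
  imports Defs
begin

text \<open>Suppose Robinson stability fails. For \<open>\<epsilon> = 1/(k+1)\<close> this yields parameters \<open>p\<^sub>k \<rightarrow> pb\<close> and points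
  near \<open>xb\<close> violating the error bound with modulus \<open>1/\<epsilon>\<close>. Ekeland's principle for \<open>dist(g(p\<^sub>k, \<cdot>), C)\<close>
  replaces them by points \<open>x\<^sub>k \<notin> \<Gamma>(p\<^sub>k)\<close> at which this distance decreases at rate at most \<open>\<epsilon>\<close>, so the
  unit regular normal \<open>\<lambda>\<^sub>k = sgn(g(p\<^sub>k, x\<^sub>k) - c\<^sub>k)\<close> at a nearest point \<open>c\<^sub>k \<in> C\<close> satisfies
  \<open>|\<nabla>\<^sub>xg(p\<^sub>k, x\<^sub>k)\<^sup>T \<lambda>\<^sub>k| \<le> \<epsilon>\<close>. Normalising the parameter shift \<open>g(p\<^sub>k, xb) - g(pb, xb)\<close>, the step
  \<open>x\<^sub>k - xb\<close> and the distance \<open>|g(p\<^sub>k, x\<^sub>k) - c\<^sub>k|\<close> by their sum \<open>s\<^sub>k\<close> gives, along a subsequence, limits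
  \<open>(v, u, \<beta>)\<close> with \<open>v \<in> D\<close>. The first assumption forces \<open>\<beta> = 0\<close> along a further subsequence; then
  \<open>c\<^sub>k = g(pb, xb) + s\<^sub>k (v + \<nabla>\<^sub>xg u + o(1))\<close>, so the limit \<open>\<lambda>\<close> of the \<open>\<lambda>\<^sub>k\<close> is a unit directional
  limiting normal in direction \<open>v + \<nabla>\<^sub>xg u\<close> with \<open>\<nabla>\<^sub>xg\<^sup>T \<lambda> = 0\<close>, contradicting the second assumption.\<close>

section \<open>Nearest points, Ekeland's principle and linearisation\<close>

lemma norm_matrix_vector_mult_le:
  fixes M :: "real^'n^'m"
  shows "norm (M *v x) \<le> real CARD('m) * real CARD('n) * norm M * norm x"
proof -
  have "onorm ((*v) M) \<le> real CARD('m) * real CARD('n) * norm M"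
    by (rule onorm_le_matrix_component)
       (meson component_le_norm_cart Finite_Cartesian_Product.norm_nth_le order_trans)
  moreover have "norm (M *v x) \<le> onorm ((*v) M) * norm x"
    by (rule onorm) (simp add: matrix_vector_mul_bounded_linear)
  ultimately show ?thesis
    by (meson mult_right_mono norm_ge_zero order_trans)
qed

lemma tendsto_matrix_vector_mult:
  fixes M :: "'b \<Rightarrow> real^'n^'m"
  shows "(M \<longlongrightarrow> A) F \<Longrightarrow> (x \<longlongrightarrow> y) F \<Longrightarrow> ((\<lambda>k. M k *v x k) \<longlongrightarrow> A *v y) F"
  unfolding matrix_vector_mult_def by (intro tendsto_intros)

lemma tendsto_transpose:
  fixes M :: "'b \<Rightarrow> real^'n^'m"
  shows "(M \<longlongrightarrow> A) F \<Longrightarrow> ((\<lambda>k. transpose (M k)) \<longlongrightarrow> transpose A) F"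
  unfolding transpose_def by (intro tendsto_intros)

lemma tendsto_of_norm_diff_le:
  fixes f :: "'a \<Rightarrow> 'b::real_normed_vector"
  assumes "\<forall>\<^sub>F k in F. norm (f k - a) \<le> e k" and "(e \<longlongrightarrow> 0) F"
  shows "(f \<longlongrightarrow> a) F"
  using Lim_null_comparison[OF assms] by (rule LIM_zero_cancel)

lemma liminf_eq_zero_imp_subseq:
  fixes X :: "nat \<Rightarrow> real"
  assumes "liminf (\<lambda>k. ereal (X k)) = 0"
  obtains r where "strict_mono r" "(X \<circ> r) \<longlonglongrightarrow> 0"
proof -
  obtain r where r: "strict_mono r" "((\<lambda>k. ereal (X k)) \<circ> r) \<longlonglongrightarrow> 0"
    using liminf_subseq_lim assms by metis
  then have "(\<lambda>k. ereal ((X \<circ> r) k)) \<longlonglongrightarrow> ereal 0"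
    by (simp add: o_def zero_ereal_def)
  with r show ?thesis
    using that lim_ereal by blast
qed

lemma scaleR_norm_sgn: "norm x *\<^sub>R sgn x = (x :: 'a::real_normed_vector)"
  by (cases "x = 0") (simp_all add: sgn_div_norm)

lemma eventually_uniformly_near:
  fixes f :: "'p::topological_space \<Rightarrow> 'a::metric_space \<Rightarrow> 'b::metric_space"
  assumes lim: "((\<lambda>(p, x). f p x) \<longlongrightarrow> f a b) (at (a, b))" and "0 < e"
  obtains r where "0 < r" "\<forall>\<^sub>F p in nhds a. \<forall>x \<in> ball b r. dist (f p x) (f a b) < e"
proof -
  have "\<forall>\<^sub>F z in nhds (a, b). dist ((\<lambda>(p, x). f p x) z) (f a b) < e"
    using tendstoD[OF lim \<open>0 < e\<close>] \<open>0 < e\<close> by (simp add: eventually_nhds_conv_at)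
  then obtain P Q where P: "eventually P (nhds a)" and Q: "eventually Q (nhds b)"
    and PQ: "\<And>p x. P p \<Longrightarrow> Q x \<Longrightarrow> dist (f p x) (f a b) < e"
    unfolding nhds_prod eventually_prod_filter by auto
  obtain r where "0 < r" and r: "\<And>x. dist x b < r \<Longrightarrow> Q x"
    using Q unfolding eventually_nhds_metric by blast
  moreover have "\<forall>\<^sub>F p in nhds a. \<forall>x \<in> ball b r. dist (f p x) (f a b) < e"
    using P by (rule eventually_mono) (metis PQ r dist_commute mem_ball)
  ultimately show ?thesis
    using that by blast
qed

text \<open>From \<open>\<bar>y - c\<bar>\<^sup>2 \<le> \<bar>y - z\<bar>\<^sup>2\<close> one gets \<open>(y - c) \<bullet> (z - c) \<le> \<bar>z - c\<bar>\<^sup>2 / 2\<close>.\<close>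
lemma nearest_point_sgn_in_regular_normal_cone:
  fixes C :: "'a::real_inner set"
  assumes c: "c \<in> C" and nearest: "\<And>z. z \<in> C \<Longrightarrow> dist y c \<le> dist y z" and "y \<noteq> c"
  shows "sgn (y - c) \<in> regular_normal_cone C c"
  unfolding regular_normal_cone_def
proof (intro CollectI conjI allI impI c)
  fix e :: real
  assume e: "e > 0"
  define r where "r = norm (y - c)"
  have r: "r > 0"
    using \<open>y \<noteq> c\<close> by (simp add: r_def)
  show "\<exists>\<delta>>0. \<forall>z\<in>C. norm (z - c) < \<delta> \<longrightarrow> sgn (y - c) \<bullet> (z - c) \<le> e * norm (z - c)"
  proof (intro exI[of _ "2 * e * r"] conjI ballI impI)
    show "2 * e * r > 0"
      using e r by simp
    fix z
    assume z: "z \<in> C" and small: "norm (z - c) < 2 * e * r"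
    have "(norm (y - c))\<^sup>2 \<le> (norm (y - z))\<^sup>2"
      using nearest[OF z] by (simp add: dist_norm power_mono)
    moreover have "(y - c) \<bullet> (z - c) = ((norm (y - c))\<^sup>2 + (norm (z - c))\<^sup>2 - (norm ((y - c) - (z - c)))\<^sup>2) / 2"
      by (rule dot_norm_neg)
    ultimately have "(y - c) \<bullet> (z - c) \<le> norm (z - c) * norm (z - c) / 2"
      by (simp add: power2_eq_square)
    also have "\<dots> \<le> e * r * norm (z - c)"
      using mult_right_mono[OF less_imp_le[OF small], of "norm (z - c)"] by simp
    finally have "(y - c) \<bullet> (z - c) \<le> e * norm (z - c) * r"
      by (simp add: mult.commute mult.left_commute)
    moreover have "sgn (y - c) \<bullet> (z - c) = ((y - c) \<bullet> (z - c)) / r"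
      by (simp add: sgn_div_norm r_def divide_inverse mult.commute)
    ultimately show "sgn (y - c) \<bullet> (z - c) \<le> e * norm (z - c)"
      using r by (simp add: pos_divide_le_eq)
  qed
qed

lemma ekeland_compact:
  fixes f :: "'a::metric_space \<Rightarrow> real"
  assumes K: "compact K" and f: "continuous_on K f" and x0: "x0 \<in> K" and \<eta>: "\<eta> > 0"
  obtains x where "x \<in> K" "\<eta> * dist x x0 \<le> f x0 - f x" "\<And>z. z \<in> K \<Longrightarrow> f x \<le> f z + \<eta> * dist z x"
proof -
  define S where "S = {x \<in> K. f x + \<eta> * dist x x0 \<le> f x0}"
  have "closed S"
    unfolding S_def by (intro continuous_on_closed_Collect_le compact_imp_closed K continuous_intros f)
  moreover have "S \<subseteq> K"
    by (auto simp: S_def)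
  ultimately have "compact S"
    using compact_Int_closed[OF K] by (metis Int_absorb1)
  moreover have "S \<noteq> {}"
    using x0 by (auto simp: S_def)
  moreover have "continuous_on S f"
    using f by (rule continuous_on_subset) (auto simp: S_def)
  ultimately obtain x where xS: "x \<in> S" and xmin: "\<And>y. y \<in> S \<Longrightarrow> f x \<le> f y"
    by (metis continuous_attains_inf)
  show ?thesis
  proof (rule that)
    show "x \<in> K" "\<eta> * dist x x0 \<le> f x0 - f x"
      using xS by (simp_all add: S_def)
    fix z
    assume "z \<in> K"
    show "f x \<le> f z + \<eta> * dist z x"
    proof (cases "z \<in> S")
      case True
      then show ?thesis
        using xmin[OF True] \<eta> by (simp add: add_increasing2)
    next
      case False
      then have "f x0 < f z + \<eta> * dist z x0"
        using \<open>z \<in> K\<close> by (simp add: S_def)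
      moreover have "\<eta> * dist z x0 \<le> \<eta> * dist z x + \<eta> * dist x x0"
        using \<eta> dist_triangle[of z x0 x] by (metis distrib_left mult_left_mono less_imp_le)
      ultimately show ?thesis
        using xS by (simp add: S_def)
    qed
  qed
qed

lemma ekeland_point_outside:
  fixes \<phi> :: "'a::metric_space \<Rightarrow> real"
  assumes "compact K" "continuous_on K \<phi>" "x \<in> K" "0 < \<epsilon>" and nonneg: "\<And>z. 0 \<le> \<phi> z"
    and fails: "Z = {} \<or> \<phi> x / \<epsilon> < infdist x Z"
  obtains y where "y \<in> K" "y \<notin> Z" "dist y x \<le> \<phi> x / \<epsilon>" "\<phi> y \<le> \<phi> x"
    "\<And>z. z \<in> K \<Longrightarrow> \<phi> y \<le> \<phi> z + \<epsilon> * dist z y"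
proof -
  obtain y where y: "y \<in> K" "\<epsilon> * dist y x \<le> \<phi> x - \<phi> y"
    and ekeland: "\<And>z. z \<in> K \<Longrightarrow> \<phi> y \<le> \<phi> z + \<epsilon> * dist z y"
    using ekeland_compact assms(1-4) by blast
  have "\<epsilon> * dist y x \<le> \<phi> x"
    using y(2) nonneg[of y] by linarith
  then have dist: "dist y x \<le> \<phi> x / \<epsilon>"
    using \<open>0 < \<epsilon>\<close> by (simp add: pos_le_divide_eq mult.commute)
  moreover have "\<phi> y \<le> \<phi> x"
    using y(2) \<open>0 < \<epsilon>\<close> by (smt (verit) zero_le_dist zero_le_mult_iff)
  moreover have "y \<notin> Z"
  proof
    assume "y \<in> Z"
    then have "infdist x Z \<le> \<phi> x / \<epsilon>"
      using infdist_le[of y Z x] dist by (simp add: dist_commute)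
    with \<open>y \<in> Z\<close> fails show False
      by auto
  qed
  ultimately show ?thesis
    using that y(1) ekeland by blast
qed

lemma jacobian_linearization_error_le:
  fixes f :: "real^'n \<Rightarrow> real^'l"
  assumes der: "\<And>x. x \<in> ball a r \<Longrightarrow> (f has_derivative (\<lambda>h. J x *v h)) (at x)"
    and close: "\<And>x. x \<in> ball a r \<Longrightarrow> norm (J x - A) \<le> e"
    and x: "x \<in> ball a r"
  shows "norm (f x - f a - A *v (x - a)) \<le> real CARD('l) * real CARD('n) * e * norm (x - a)"
proof -
  define h where "h x = f x - A *v x" for x
  have "a \<in> ball a r"
    using x by (metis centre_in_ball mem_ball le_less_trans zero_le_dist)
  have "(h has_derivative (\<lambda>v. (J y - A) *v v)) (at y within ball a r)" if "y \<in> ball a r" for y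
  proof -
    have "(h has_derivative (\<lambda>v. J y *v v - A *v v)) (at y)"
      unfolding h_def
      by (intro derivative_intros der that bounded_linear_imp_has_derivative matrix_vector_mul_bounded_linear)
    then show ?thesis
      by (simp add: matrix_vector_mult_diff_rdistrib has_derivative_at_withinI)
  qed
  moreover have "onorm (\<lambda>v. (J y - A) *v v) \<le> real CARD('l) * real CARD('n) * e" if "y \<in> ball a r" for y
  proof (rule onorm_le)
    fix v
    have "norm ((J y - A) *v v) \<le> real CARD('l) * real CARD('n) * norm (J y - A) * norm v"
      by (rule norm_matrix_vector_mult_le)
    also have "\<dots> \<le> real CARD('l) * real CARD('n) * e * norm v"
      using close[OF that] by (intro mult_right_mono mult_left_mono) auto
    finally show "norm ((J y - A) *v v) \<le> real CARD('l) * real CARD('n) * e * norm v" .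
  qed
  ultimately have "norm (h x - h a) \<le> real CARD('l) * real CARD('n) * e * norm (x - a)"
    using differentiable_bound[OF convex_ball _ _ x \<open>a \<in> ball a r\<close>, of h "\<lambda>y v. (J y - A) *v v"]
    by blast
  then show ?thesis
    by (simp add: h_def matrix_vector_mult_diff_distrib algebra_simps)
qed

text \<open>If \<open>|d| > \<eta>\<close>, a small step from \<open>x\<^sub>0\<close> in direction \<open>-d\<close> decreases \<open>H\<close> faster than the growth
  bound allows.\<close>
lemma norm_gradient_le_growth_rate:
  fixes H :: "'a::real_inner \<Rightarrow> real"
  assumes der: "(H has_derivative (\<lambda>h. d \<bullet> h)) (at x0)" and "\<eta> \<ge> 0" and "r > 0"
    and growth: "\<And>x. norm (x - x0) < r \<Longrightarrow> H x0 - \<eta> * norm (x - x0) \<le> H x"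
  shows "norm d \<le> \<eta>"
proof (rule ccontr)
  assume "\<not> norm d \<le> \<eta>"
  then have d: "norm d > \<eta>" "norm d > 0"
    using \<open>\<eta> \<ge> 0\<close> by linarith+
  define e where "e = (norm d - \<eta>) / 2"
  have "e > 0"
    using d by (simp add: e_def)
  with der obtain r' where "r' > 0" and
    lin: "\<And>y. norm (y - x0) < r' \<Longrightarrow> norm (H y - H x0 - d \<bullet> (y - x0)) \<le> e * norm (y - x0)"
    unfolding has_derivative_at_alt by blast
  define t where "t = min r r' / (2 * norm d)"
  define y where "y = x0 - t *\<^sub>R d"
  have t: "t > 0"
    using \<open>r > 0\<close> \<open>r' > 0\<close> d by (simp add: t_def)
  have ny: "norm (y - x0) = t * norm d"
    using t by (simp add: y_def)
  moreover have "t * norm d = min r r' / 2"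
    using d by (simp add: t_def)
  ultimately have "norm (y - x0) < r" "norm (y - x0) < r'"
    using \<open>r > 0\<close> \<open>r' > 0\<close> by auto
  moreover have "d \<bullet> (y - x0) = - t * (norm d)\<^sup>2"
    by (simp add: y_def power2_norm_eq_inner)
  ultimately have "H y - H x0 + t * (norm d)\<^sup>2 \<le> e * (t * norm d)"
    and "H x0 - \<eta> * (t * norm d) \<le> H y"
    using lin[of y] growth[of y] ny by (simp_all add: abs_le_iff)
  then have "(t * norm d) * norm d \<le> (t * norm d) * (e + \<eta>)"
    by (simp add: power2_eq_square algebra_simps)
  then have "norm d \<le> e + \<eta>"
    using t d by (simp add: mult_le_cancel_left_pos)
  then show False
    using d by (simp add: e_def field_simps)
qed

lemma has_derivative_norm_diff:
  fixes F :: "real^'n \<Rightarrow> real^'l"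
  assumes der: "(F has_derivative (\<lambda>h. J *v h)) (at x0)" and "F x0 \<noteq> c"
  shows "((\<lambda>x. norm (F x - c)) has_derivative (\<lambda>h. (transpose J *v sgn (F x0 - c)) \<bullet> h)) (at x0)"
proof -
  have "((\<lambda>x. F x - c) has_derivative (\<lambda>h. J *v h)) (at x0)"
    using has_derivative_diff[OF der has_derivative_const[of c]] by simp
  moreover have "(norm has_derivative (\<lambda>h. h \<bullet> sgn (F x0 - c))) (at (F x0 - c))"
    using \<open>F x0 \<noteq> c\<close> by (intro has_derivative_norm) simp
  ultimately have "((\<lambda>x. norm (F x - c)) has_derivative (\<lambda>h. (J *v h) \<bullet> sgn (F x0 - c))) (at x0)"
    by (rule has_derivative_compose)
  moreover have "(\<lambda>h. (J *v h) \<bullet> sgn (F x0 - c)) = (\<lambda>h. (transpose J *v sgn (F x0 - c)) \<bullet> h)"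
    by simp (metis dot_lmul_matrix inner_commute)
  ultimately show ?thesis
    by simp
qed

section \<open>Approximate violations of the error bound\<close>

text \<open>The data produced at a point where Robinson stability fails with modulus \<open>1/\<epsilon>\<close>: \<open>p\<close> is a
  parameter close to \<open>pb\<close>, \<open>x \<notin> \<Gamma>(p)\<close> is an Ekeland point of \<open>dist(g(p,\<cdot>), C)\<close> near \<open>xb\<close> and
  \<open>c\<close> is a nearest point of \<open>C\<close> to \<open>g(p,x)\<close>.\<close>
definition approx_violation ::
  "('p \<Rightarrow> real^'n \<Rightarrow> real^'l) \<Rightarrow> (real^'l) set \<Rightarrow> ('p \<Rightarrow> real) \<Rightarrow> 'p \<Rightarrow> real^'n
    \<Rightarrow> real \<Rightarrow> 'p \<Rightarrow> real^'n \<Rightarrow> real^'l \<Rightarrow> real \<Rightarrow> bool" where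
  "approx_violation g C \<zeta> pb xb \<epsilon> p x c \<delta> \<longleftrightarrow>
     0 < \<delta> \<and>
     (\<forall>z. norm (z - xb) < \<delta> \<longrightarrow> (g p has_derivative (\<lambda>h. pjac g p z *v h)) (at z) \<and>
                              norm (pjac g p z - pjac g pb xb) < \<epsilon>) \<and>
     norm (g p xb - g pb xb) < \<epsilon> \<and> norm (g p xb - g pb xb) < \<epsilon> * \<delta> \<and>
     \<bar>\<zeta> p - \<zeta> pb\<bar> < \<epsilon> \<and>
     norm (x - xb) < \<delta> \<and> norm (x - xb) < 2 * \<epsilon> \<and>
     c \<in> C \<and> g p x \<notin> C \<and> infdist (g p x) C = dist (g p x) c \<and> infdist (g p x) C < \<epsilon> \<and>
     (\<forall>z. norm (z - xb) \<le> \<delta> \<longrightarrow> infdist (g p x) C \<le> infdist (g p z) C + \<epsilon> * norm (z - x))"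

lemma ekeland_point_off_solution_set:
  fixes g :: "'p \<Rightarrow> real^'n \<Rightarrow> real^'l"
  assumes base_in_C: "g pb xb \<in> C" and "0 < \<epsilon>"
    and diff: "\<And>z. z \<in> cball xb \<delta> \<Longrightarrow> g p differentiable (at z)"
    and near: "dist (g p x) (g pb xb) < \<eta>" and \<eta>: "\<eta> \<le> \<epsilon> * \<epsilon>" "\<eta> \<le> \<epsilon> * \<delta> / 3"
    and x: "dist xb x < \<delta> / 3" "dist xb x < \<epsilon>"
    and fails: "Gam g C p = {} \<or> infdist (g p x) C / \<epsilon> < infdist x (Gam g C p)"
  obtains xt where "g p xt \<notin> C" "norm (xt - xb) < \<delta>" "norm (xt - xb) < 2 * \<epsilon>"
    "infdist (g p xt) C < \<eta>"
    "\<And>z. norm (z - xb) \<le> \<delta> \<Longrightarrow> infdist (g p xt) C \<le> infdist (g p z) C + \<epsilon> * norm (z - xt)"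
proof -
  define \<phi> where "\<phi> z = infdist (g p z) C" for z
  have "continuous_on (cball xb \<delta>) \<phi>"
    unfolding \<phi>_def using diff
    by (intro continuous_intros differentiable_imp_continuous_on differentiable_at_imp_differentiable_on)
  moreover have "x \<in> cball xb \<delta>"
    using x(1) zero_le_dist[of xb x] unfolding mem_cball by linarith
  moreover have "\<And>z. 0 \<le> \<phi> z"
    by (simp add: \<phi>_def infdist_nonneg)
  moreover have "Gam g C p = {} \<or> \<phi> x / \<epsilon> < infdist x (Gam g C p)"
    using fails by (simp add: \<phi>_def)
  ultimately obtain xt where xt: "xt \<in> cball xb \<delta>" "xt \<notin> Gam g C p" "dist xt x \<le> \<phi> x / \<epsilon>"
    "\<phi> xt \<le> \<phi> x" and ekeland: "\<And>z. z \<in> cball xb \<delta> \<Longrightarrow> \<phi> xt \<le> \<phi> z + \<epsilon> * dist z xt"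
    using ekeland_point_outside[of "cball xb \<delta>" \<phi> x \<epsilon> "Gam g C p", OF compact_cball] \<open>0 < \<epsilon>\<close>
    by blast
  have "\<phi> x < \<eta>"
    using infdist_le[OF base_in_C, of "g p x"] near by (simp add: \<phi>_def)
  then have "dist xt x < \<eta> / \<epsilon>"
    using xt(3) \<open>0 < \<epsilon>\<close> by (smt (verit) divide_strict_right_mono)
  moreover have "\<eta> / \<epsilon> \<le> \<epsilon>" "\<eta> / \<epsilon> \<le> \<delta> / 3"
    using \<eta> \<open>0 < \<epsilon>\<close> by (simp_all add: pos_divide_le_eq mult.commute)
  moreover have "dist xb xt \<le> dist xb x + dist xt x"
    using dist_triangle[of xb xt x] by (simp add: dist_commute)
  ultimately have "dist xb xt < \<delta>" "dist xb xt < 2 * \<epsilon>"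
    using x zero_le_dist[of xb x] by linarith+
  show ?thesis
  proof (rule that)
    show "norm (xt - xb) < \<delta>" "norm (xt - xb) < 2 * \<epsilon>"
      using \<open>dist xb xt < \<delta>\<close> \<open>dist xb xt < 2 * \<epsilon>\<close> by (simp_all add: dist_norm norm_minus_commute)
    show "g p xt \<notin> C"
      using xt(2) by (simp add: Gam_def)
    show "infdist (g p xt) C < \<eta>"
      using xt(4) \<open>\<phi> x < \<eta>\<close> by (simp add: \<phi>_def)
    show "infdist (g p xt) C \<le> infdist (g p z) C + \<epsilon> * norm (z - xt)" if "norm (z - xb) \<le> \<delta>" for z
      using ekeland[of z] that by (simp add: \<phi>_def dist_norm norm_minus_commute)
  qed
qed

lemma approx_violation_at_bad_point:
  fixes g :: "'p \<Rightarrow> real^'n \<Rightarrow> real^'l"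
  assumes C: "closed C" and base_in_C: "g pb xb \<in> C" and \<epsilon>: "0 < \<epsilon>" "\<epsilon> \<le> 1" and "0 < \<delta>"
    and diff: "\<And>z. z \<in> cball xb \<delta> \<Longrightarrow> g p differentiable (at z)"
    and jac: "\<And>z. z \<in> ball xb \<delta> \<Longrightarrow> norm (pjac g p z - pjac g pb xb) < \<epsilon>"
    and near: "dist (g p x) (g pb xb) < \<eta>" "dist (g p xb) (g pb xb) < \<eta>"
    and \<eta>: "\<eta> \<le> \<epsilon> * \<epsilon>" "\<eta> \<le> \<epsilon> * \<delta> / 3"
    and zeta: "\<bar>\<zeta> p - \<zeta> pb\<bar> < \<epsilon>"
    and x: "dist xb x < \<delta> / 3" "dist xb x < \<epsilon>"
    and fails: "Gam g C p = {} \<or> infdist (g p x) C / \<epsilon> < infdist x (Gam g C p)"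
  shows "\<exists>xt c. approx_violation g C \<zeta> pb xb \<epsilon> p xt c \<delta>"
proof -
  obtain xt where xt: "g p xt \<notin> C" "norm (xt - xb) < \<delta>" "norm (xt - xb) < 2 * \<epsilon>"
    "infdist (g p xt) C < \<eta>"
    and ekeland: "\<And>z. norm (z - xb) \<le> \<delta> \<Longrightarrow> infdist (g p xt) C \<le> infdist (g p z) C + \<epsilon> * norm (z - xt)"
    using ekeland_point_off_solution_set[OF base_in_C \<open>0 < \<epsilon>\<close> diff near(1) \<eta> x fails] by blast
  obtain c where c: "c \<in> C" "infdist (g p xt) C = dist (g p xt) c"
    using infdist_attains_inf[OF C] base_in_C by blast
  have "\<epsilon> * \<epsilon> \<le> \<epsilon>"
    using mult_left_le[OF \<open>\<epsilon> \<le> 1\<close>] \<open>0 < \<epsilon>\<close> by simp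
  moreover have "0 < \<epsilon> * \<delta>"
    using \<open>0 < \<epsilon>\<close> \<open>0 < \<delta>\<close> by simp
  ultimately have \<eta>_less: "\<eta> \<le> \<epsilon>" "\<eta> < \<epsilon> * \<delta>"
    using \<eta> by linarith+
  show ?thesis
    unfolding approx_violation_def
  proof (intro exI[of _ xt] exI[of _ c] conjI allI impI c(1) xt(1-3) ekeland)
    fix z
    assume "norm (z - xb) < \<delta>"
    then have "z \<in> ball xb \<delta>"
      by (simp add: dist_norm norm_minus_commute)
    then show "(g p has_derivative (\<lambda>h. pjac g p z *v h)) (at z)" "norm (pjac g p z - pjac g pb xb) < \<epsilon>"
      using diff jac by (auto simp: pjac_def jacobian_works)
  qed (use \<open>0 < \<delta>\<close> near(2) \<eta>_less zeta xt(4) c(2) in \<open>auto simp: dist_norm\<close>)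
qed

lemma uniform_neighbourhoods:
  fixes g :: "'p::topological_space \<Rightarrow> real^'n \<Rightarrow> real^'l"
  assumes standing: "standing_assumptions g pb xb" and zeta: "(\<zeta> \<longlongrightarrow> \<zeta> pb) (at pb)" and "0 < \<epsilon>"
  obtains \<delta> r V where "0 < \<delta>" "0 < r" "open V" "pb \<in> V"
    "\<And>p z. p \<in> V \<Longrightarrow> z \<in> cball xb \<delta> \<Longrightarrow> g p differentiable (at z)"
    "\<And>p z. p \<in> V \<Longrightarrow> z \<in> ball xb \<delta> \<Longrightarrow> norm (pjac g p z - pjac g pb xb) < \<epsilon>"
    "\<And>p z. p \<in> V \<Longrightarrow> z \<in> ball xb r \<Longrightarrow> dist (g p z) (g pb xb) < min (\<epsilon> * \<epsilon>) (\<epsilon> * \<delta> / 3)"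
    "\<And>p. p \<in> V \<Longrightarrow> \<bar>\<zeta> p - \<zeta> pb\<bar> < \<epsilon>"
proof -
  obtain U0 V0 where U0: "open U0" "xb \<in> U0" and V0: "open V0" "pb \<in> V0"
    and diff: "\<And>p x. p \<in> V0 \<Longrightarrow> x \<in> U0 \<Longrightarrow> g p differentiable (at x)"
    and lim_g: "((\<lambda>(p, x). g p x) \<longlongrightarrow> g pb xb) (at (pb, xb))"
    and lim_jac: "((\<lambda>(p, x). pjac g p x) \<longlongrightarrow> pjac g pb xb) (at (pb, xb))"
    using standing unfolding standing_assumptions_def by blast
  obtain \<rho> where "0 < \<rho>" "cball xb \<rho> \<subseteq> U0"
    using U0 open_contains_cball by blast
  obtain \<delta>1 where "0 < \<delta>1"
    and jac: "\<forall>\<^sub>F p in nhds pb. \<forall>x \<in> ball xb \<delta>1. dist (pjac g p x) (pjac g pb xb) < \<epsilon>"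
    using eventually_uniformly_near[OF lim_jac \<open>0 < \<epsilon>\<close>] by blast
  define \<delta> where "\<delta> = min \<delta>1 \<rho>"
  have \<delta>: "0 < \<delta>" "ball xb \<delta> \<subseteq> ball xb \<delta>1" "cball xb \<delta> \<subseteq> U0"
    using \<open>0 < \<delta>1\<close> \<open>0 < \<rho>\<close> \<open>cball xb \<rho> \<subseteq> U0\<close> by (auto simp: \<delta>_def)
  then have "0 < min (\<epsilon> * \<epsilon>) (\<epsilon> * \<delta> / 3)"
    using \<open>0 < \<epsilon>\<close> by simp
  from eventually_uniformly_near[OF lim_g this] obtain r where "0 < r"
    and near: "\<forall>\<^sub>F p in nhds pb. \<forall>x \<in> ball xb r. dist (g p x) (g pb xb) < min (\<epsilon> * \<epsilon>) (\<epsilon> * \<delta> / 3)"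
    by blast
  have "\<forall>\<^sub>F p in nhds pb. \<bar>\<zeta> p - \<zeta> pb\<bar> < \<epsilon>"
    using tendstoD[OF zeta \<open>0 < \<epsilon>\<close>] \<open>0 < \<epsilon>\<close> by (simp add: eventually_nhds_conv_at dist_real_def)
  moreover have "\<forall>\<^sub>F p in nhds pb. p \<in> V0"
    using V0 eventually_nhds by blast
  ultimately have "\<forall>\<^sub>F p in nhds pb. p \<in> V0 \<and> \<bar>\<zeta> p - \<zeta> pb\<bar> < \<epsilon> \<and>
       (\<forall>x \<in> ball xb \<delta>1. dist (pjac g p x) (pjac g pb xb) < \<epsilon>) \<and>
       (\<forall>x \<in> ball xb r. dist (g p x) (g pb xb) < min (\<epsilon> * \<epsilon>) (\<epsilon> * \<delta> / 3))"
    using jac near by (simp add: eventually_conj_iff)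
  then obtain V where "open V" "pb \<in> V" and good: "\<And>p. p \<in> V \<Longrightarrow> p \<in> V0 \<and> \<bar>\<zeta> p - \<zeta> pb\<bar> < \<epsilon> \<and>
       (\<forall>x \<in> ball xb \<delta>1. dist (pjac g p x) (pjac g pb xb) < \<epsilon>) \<and>
       (\<forall>x \<in> ball xb r. dist (g p x) (g pb xb) < min (\<epsilon> * \<epsilon>) (\<epsilon> * \<delta> / 3))"
    unfolding eventually_nhds by blast
  show ?thesis
  proof (rule that[OF \<delta>(1) \<open>0 < r\<close> \<open>open V\<close> \<open>pb \<in> V\<close>])
    show "g p differentiable (at z)" if "p \<in> V" "z \<in> cball xb \<delta>" for p z
      using diff good \<delta>(3) that by blast
    show "norm (pjac g p z - pjac g pb xb) < \<epsilon>" if "p \<in> V" "z \<in> ball xb \<delta>" for p z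
      using good \<delta>(2) that by (auto simp: dist_norm)
  qed (use good in auto)
qed

lemma approx_violation_exists:
  fixes g :: "'p::topological_space \<Rightarrow> real^'n \<Rightarrow> real^'l"
  assumes C: "closed C" and standing: "standing_assumptions g pb xb" and base_in_C: "g pb xb \<in> C"
    and zeta: "(\<zeta> \<longlongrightarrow> \<zeta> pb) (at pb)" and not_stable: "\<not> robinson_stable g C pb xb"
    and \<epsilon>: "0 < \<epsilon>" "\<epsilon> \<le> 1"
  shows "\<exists>p x c \<delta>. approx_violation g C \<zeta> pb xb \<epsilon> p x c \<delta>"
proof -
  obtain \<delta> r V where "0 < \<delta>" "0 < r" "open V" "pb \<in> V"
    and diff: "\<And>p z. p \<in> V \<Longrightarrow> z \<in> cball xb \<delta> \<Longrightarrow> g p differentiable (at z)"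
    and jac: "\<And>p z. p \<in> V \<Longrightarrow> z \<in> ball xb \<delta> \<Longrightarrow> norm (pjac g p z - pjac g pb xb) < \<epsilon>"
    and near: "\<And>p z. p \<in> V \<Longrightarrow> z \<in> ball xb r \<Longrightarrow> dist (g p z) (g pb xb) < min (\<epsilon> * \<epsilon>) (\<epsilon> * \<delta> / 3)"
    and zeta_near: "\<And>p. p \<in> V \<Longrightarrow> \<bar>\<zeta> p - \<zeta> pb\<bar> < \<epsilon>"
    using uniform_neighbourhoods[OF standing zeta \<open>0 < \<epsilon>\<close>] by blast
  define r' where "r' = min (min (\<delta> / 3) r) \<epsilon>"
  have "0 < r'"
    using \<open>0 < \<delta>\<close> \<open>0 < r\<close> \<epsilon> by (simp add: r'_def)
  with not_stable \<open>open V\<close> \<open>pb \<in> V\<close> obtain p x where p: "p \<in> V" and x: "x \<in> ball xb r'"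
    and fails: "\<not> (Gam g C p \<noteq> {} \<and> infdist x (Gam g C p) \<le> (1 / \<epsilon>) * infdist (g p x) C)"
    unfolding robinson_stable_def using \<epsilon>
    by (metis centre_in_ball open_ball less_eq_real_def divide_pos_pos zero_less_one)
  have "dist (g p x) (g pb xb) < min (\<epsilon> * \<epsilon>) (\<epsilon> * \<delta> / 3)"
    and "dist (g p xb) (g pb xb) < min (\<epsilon> * \<epsilon>) (\<epsilon> * \<delta> / 3)"
    using near[OF p] x \<open>0 < r\<close> by (auto simp: r'_def)
  moreover have "dist xb x < \<delta> / 3" "dist xb x < \<epsilon>"
    using x by (auto simp: r'_def)
  moreover have "Gam g C p = {} \<or> infdist (g p x) C / \<epsilon> < infdist x (Gam g C p)"
    using fails \<epsilon> by (auto simp: divide_inverse_commute)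
  ultimately have "\<exists>xt c. approx_violation g C \<zeta> pb xb \<epsilon> p xt c \<delta>"
    using approx_violation_at_bad_point[where g=g and pb=pb and p=p and x=x and \<zeta>=\<zeta>
        and \<eta>="min (\<epsilon> * \<epsilon>) (\<epsilon> * \<delta> / 3)", OF C base_in_C \<epsilon> \<open>0 < \<delta>\<close> diff[OF p] jac[OF p]]
      zeta_near[OF p]
    by auto
  then show ?thesis
    by blast
qed

section \<open>Sequences of approximate violations\<close>

lemma image_deriv_gen_subset: "image_deriv_gen g \<zeta> pb xb \<subseteq> image_deriv g \<zeta> pb xb"
  unfolding image_deriv_def by blast

lemma image_deriv_scaleR: "v \<in> image_deriv g \<zeta> pb xb \<Longrightarrow> 0 \<le> a \<Longrightarrow> a *\<^sub>R v \<in> image_deriv g \<zeta> pb xb"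
  unfolding image_deriv_def cone_def by blast

lemma zero_in_image_deriv: "0 \<in> image_deriv g \<zeta> pb xb"
  unfolding image_deriv_def by blast

locale approx_violations =
  fixes g :: "'p \<Rightarrow> real^'n \<Rightarrow> real^'l" and C :: "(real^'l) set" and \<zeta> :: "'p \<Rightarrow> real"
    and pb :: 'p and xb :: "real^'n" and \<epsilon> :: "nat \<Rightarrow> real"
    and pk :: "nat \<Rightarrow> 'p" and xt :: "nat \<Rightarrow> real^'n" and cc :: "nat \<Rightarrow> real^'l" and \<delta> :: "nat \<Rightarrow> real"
  assumes base_in_C: "g pb xb \<in> C"
    and eps_pos: "0 < \<epsilon> k" and eps_le: "\<epsilon> k \<le> 1 / real (Suc k)"
    and violation: "approx_violation g C \<zeta> pb xb (\<epsilon> k) (pk k) (xt k) (cc k) (\<delta> k)"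
begin

definition shift :: "nat \<Rightarrow> real^'l" where
  "shift k = g (pk k) xb - g pb xb"

definition gap :: "nat \<Rightarrow> real" where
  "gap k = infdist (g (pk k) (xt k)) C"

definition normal :: "nat \<Rightarrow> real^'l" where
  "normal k = sgn (g (pk k) (xt k) - cc k)"

text \<open>Dividing by \<open>scale\<close> puts the triple \<open>(shift_dir, xt_dir, gap_ratio)\<close> on the unit sphere of the
  sum norm, so it has convergent subsequences whose limits cannot all vanish.\<close>
definition scale :: "nat \<Rightarrow> real" where
  "scale k = norm (shift k) + norm (xt k - xb) + gap k"

definition shift_dir :: "nat \<Rightarrow> real^'l" where
  "shift_dir k = shift k /\<^sub>R scale k"

definition xt_dir :: "nat \<Rightarrow> real^'n" where
  "xt_dir k = (xt k - xb) /\<^sub>R scale k"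

definition gap_ratio :: "nat \<Rightarrow> real" where
  "gap_ratio k = gap k / scale k"

lemma delta_pos: "0 < \<delta> k"
  and has_derivative_near:
    "norm (z - xb) < \<delta> k \<Longrightarrow> (g (pk k) has_derivative (\<lambda>h. pjac g (pk k) z *v h)) (at z)"
  and jacobian_near: "norm (z - xb) < \<delta> k \<Longrightarrow> norm (pjac g (pk k) z - pjac g pb xb) < \<epsilon> k"
  and norm_shift_less: "norm (shift k) < \<epsilon> k" "norm (shift k) < \<epsilon> k * \<delta> k"
  and zeta_near: "\<bar>\<zeta> (pk k) - \<zeta> pb\<bar> < \<epsilon> k"
  and xt_near: "norm (xt k - xb) < \<delta> k" "norm (xt k - xb) < 2 * \<epsilon> k"
  and cc_in_C: "cc k \<in> C" and g_xt_notin_C: "g (pk k) (xt k) \<notin> C"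
  and gap_eq_dist: "gap k = dist (g (pk k) (xt k)) (cc k)" and gap_less: "gap k < \<epsilon> k"
  and gap_le_ekeland: "norm (z - xb) \<le> \<delta> k \<Longrightarrow> gap k \<le> infdist (g (pk k) z) C + \<epsilon> k * norm (z - xt k)"
  using violation[of k] unfolding approx_violation_def shift_def gap_def by auto

lemma g_xt_neq_cc: "g (pk k) (xt k) \<noteq> cc k"
  using cc_in_C[of k] g_xt_notin_C[of k] by auto

lemma gap_pos: "0 < gap k"
  using g_xt_neq_cc[of k] by (simp add: gap_eq_dist)

lemma scale_pos: "0 < scale k"
  using gap_pos[of k] by (simp add: scale_def add_nonneg_pos)

lemma norm_normal: "norm (normal k) = 1"
  using g_xt_neq_cc[of k] by (simp add: normal_def norm_sgn)

lemma g_xt_minus_cc: "g (pk k) (xt k) - cc k = gap k *\<^sub>R normal k"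
  by (simp add: gap_eq_dist dist_norm normal_def scaleR_norm_sgn)

lemma norm_dirs_sum: "norm (shift_dir k) + norm (xt_dir k) + gap_ratio k = 1"
proof -
  have "norm (shift_dir k) + norm (xt_dir k) + gap_ratio k
      = (norm (shift k) + norm (xt k - xb) + gap k) / scale k"
    using scale_pos[of k] by (simp add: shift_dir_def xt_dir_def gap_ratio_def divide_inverse_commute distrib_left)
  then show ?thesis
    using scale_pos[of k] by (simp add: scale_def)
qed

lemma gap_ratio_nonneg: "0 \<le> gap_ratio k"
  using gap_pos[of k] scale_pos[of k] by (simp add: gap_ratio_def)

lemma shift_div_scale_le_1: "norm (shift k) / scale k \<le> 1"
  and xt_dist_div_scale_le_1: "norm (xt k - xb) / scale k \<le> 1"
  using scale_pos[of k] gap_pos[of k] by (simp_all add: scale_def)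

lemma eps_tendsto_zero: "\<epsilon> \<longlonglongrightarrow> 0"
proof (rule tendsto_of_norm_diff_le)
  show "\<forall>\<^sub>F k in sequentially. norm (\<epsilon> k - 0) \<le> inverse (real (Suc k))"
    using eps_pos eps_le by (simp add: less_imp_le divide_inverse)
qed (rule LIMSEQ_inverse_real_of_nat)

lemma scale_tendsto_zero: "scale \<longlonglongrightarrow> 0"
proof (rule tendsto_of_norm_diff_le)
  show "\<forall>\<^sub>F k in sequentially. norm (scale k - 0) \<le> 4 * \<epsilon> k"
    using norm_shift_less xt_near gap_less scale_pos
    by (intro always_eventually allI) (smt (verit) scale_def real_norm_def)
  show "(\<lambda>k. 4 * \<epsilon> k) \<longlonglongrightarrow> 0"
    using tendsto_mult_right_zero[OF eps_tendsto_zero] by simp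
qed

lemma jacobian_xt_tendsto: "(\<lambda>k. pjac g (pk k) (xt k)) \<longlonglongrightarrow> pjac g pb xb"
proof (rule tendsto_of_norm_diff_le[OF _ eps_tendsto_zero])
  show "\<forall>\<^sub>F k in sequentially. norm (pjac g (pk k) (xt k) - pjac g pb xb) \<le> \<epsilon> k"
    using jacobian_near[OF xt_near(1)] by (simp add: less_imp_le)
qed

lemma normal_in_regular_normal_cone: "normal k \<in> regular_normal_cone C (cc k)"
  unfolding normal_def
proof (rule nearest_point_sgn_in_regular_normal_cone[OF cc_in_C])
  show "dist (g (pk k) (xt k)) (cc k) \<le> dist (g (pk k) (xt k)) z" if "z \<in> C" for z
    using infdist_le[OF that] by (simp add: gap_eq_dist[symmetric] gap_def)
  show "g (pk k) (xt k) \<noteq> cc k"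
    by (rule g_xt_neq_cc)
qed

text \<open>The function \<open>|g(pk k, \<cdot>) - cc k|\<close> majorises \<open>dist(g(pk k, \<cdot>), C)\<close> with equality at \<open>xt k\<close>, so
  by Ekeland's inequality it decreases at rate at most \<open>\<epsilon> k\<close> there; its gradient at \<open>xt k\<close> is
  \<open>J\<^sup>T normal\<close>.\<close>
lemma norm_transpose_jacobian_normal_le:
  "norm (transpose (pjac g (pk k) (xt k)) *v normal k) \<le> \<epsilon> k"
  unfolding normal_def
proof (rule norm_gradient_le_growth_rate[where r="\<delta> k - norm (xt k - xb)"])
  show "((\<lambda>x. norm (g (pk k) x - cc k)) has_derivative
      (\<lambda>h. (transpose (pjac g (pk k) (xt k)) *v sgn (g (pk k) (xt k) - cc k)) \<bullet> h)) (at (xt k))"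
    using has_derivative_near[OF xt_near(1)] g_xt_neq_cc by (rule has_derivative_norm_diff)
  show "0 \<le> \<epsilon> k" "0 < \<delta> k - norm (xt k - xb)"
    using eps_pos xt_near(1) by (auto simp: less_imp_le)
  fix x
  assume x: "norm (x - xt k) < \<delta> k - norm (xt k - xb)"
  have "norm (x - xb) \<le> \<delta> k"
    using norm_triangle_ineq[of "x - xt k" "xt k - xb"] x by simp
  then have "gap k \<le> infdist (g (pk k) x) C + \<epsilon> k * norm (x - xt k)"
    by (rule gap_le_ekeland)
  moreover have "infdist (g (pk k) x) C \<le> norm (g (pk k) x - cc k)"
    using infdist_le[OF cc_in_C] by (simp add: dist_norm)
  ultimately show "norm (g (pk k) (xt k) - cc k) - \<epsilon> k * norm (x - xt k) \<le> norm (g (pk k) x - cc k)"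
    by (simp add: gap_eq_dist dist_norm)
qed

lemma linearization_error_le:
  assumes "norm (z - xb) < \<delta> k"
  shows "norm (g (pk k) z - g (pk k) xb - pjac g pb xb *v (z - xb))
    \<le> real CARD('l) * real CARD('n) * \<epsilon> k * norm (z - xb)"
proof (rule jacobian_linearization_error_le[where r="\<delta> k" and J="pjac g (pk k)"])
  show "(g (pk k) has_derivative (\<lambda>h. pjac g (pk k) x *v h)) (at x)"
    and "norm (pjac g (pk k) x - pjac g pb xb) \<le> \<epsilon> k" if "x \<in> ball xb (\<delta> k)" for x
    using has_derivative_near jacobian_near that by (auto simp: dist_norm norm_minus_commute less_imp_le)
  show "z \<in> ball xb (\<delta> k)"
    using assms by (simp add: dist_norm norm_minus_commute)
qed

lemma nearest_point_expansion:
  "norm ((cc k - g pb xb) /\<^sub>R scale k - (shift_dir k + pjac g pb xb *v xt_dir k - gap_ratio k *\<^sub>R normal k))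
    \<le> real CARD('l) * real CARD('n) * \<epsilon> k"
proof -
  define e where "e = g (pk k) (xt k) - g (pk k) xb - pjac g pb xb *v (xt k - xb)"
  have "cc k - g pb xb = shift k + pjac g pb xb *v (xt k - xb) + e - gap k *\<^sub>R normal k"
    unfolding e_def shift_def g_xt_minus_cc[symmetric] by simp
  then have "(cc k - g pb xb) /\<^sub>R scale k
      = shift_dir k + pjac g pb xb *v xt_dir k + e /\<^sub>R scale k - gap_ratio k *\<^sub>R normal k"
    by (simp add: shift_dir_def xt_dir_def gap_ratio_def matrix_vector_mult_scaleR scaleR_diff_right
        scaleR_add_right matrix_vector_mult_diff_distrib divide_inverse_commute)
  then have "(cc k - g pb xb) /\<^sub>R scale k - (shift_dir k + pjac g pb xb *v xt_dir k - gap_ratio k *\<^sub>R normal k)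
      = e /\<^sub>R scale k"
    by (simp add: algebra_simps)
  also have "norm \<dots> = norm e / scale k"
    using scale_pos[of k] by (simp add: divide_inverse_commute)
  also have "\<dots> \<le> real CARD('l) * real CARD('n) * \<epsilon> k * norm (xt k - xb) / scale k"
    unfolding e_def using linearization_error_le[OF xt_near(1)] scale_pos[of k]
    by (intro divide_right_mono) auto
  also have "\<dots> = real CARD('l) * real CARD('n) * \<epsilon> k * (norm (xt k - xb) / scale k)"
    by simp
  also have "\<dots> \<le> real CARD('l) * real CARD('n) * \<epsilon> k"
    using xt_dist_div_scale_le_1[of k] eps_pos[of k] by (intro mult_left_le) auto
  finally show ?thesis .
qed

text \<open>Ekeland's inequality tested at \<open>z = xb + |shift k| u\<close>.\<close>
lemma gap_le_first_order:
  assumes small: "norm (shift k) * norm u < \<delta> k"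
  shows "gap k \<le> infdist (g pb xb + norm (shift k) *\<^sub>R (v + pjac g pb xb *v u)) C
    + real CARD('l) * real CARD('n) * \<epsilon> k * (norm (shift k) * norm u)
    + norm (shift k - norm (shift k) *\<^sub>R v)
    + \<epsilon> k * (norm (shift k) * norm u + norm (xt k - xb))"
proof -
  define \<tau> where "\<tau> = norm (shift k)"
  define z where "z = xb + \<tau> *\<^sub>R u"
  define w where "w = g pb xb + \<tau> *\<^sub>R (v + pjac g pb xb *v u)"
  have z: "norm (z - xb) = \<tau> * norm u"
    by (simp add: z_def \<tau>_def)
  then have "gap k \<le> infdist (g (pk k) z) C + \<epsilon> k * norm (z - xt k)"
    using small by (intro gap_le_ekeland) (simp add: \<tau>_def)
  moreover have "infdist (g (pk k) z) C \<le> infdist w C + norm (g (pk k) z - w)"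
    using infdist_triangle[of "g (pk k) z" C w] by (simp add: dist_norm)
  moreover have "g (pk k) z - w = (g (pk k) z - g (pk k) xb - pjac g pb xb *v (z - xb)) + (shift k - \<tau> *\<^sub>R v)"
    by (simp add: w_def z_def shift_def matrix_vector_mult_scaleR algebra_simps)
  then have "norm (g (pk k) z - w)
      \<le> real CARD('l) * real CARD('n) * \<epsilon> k * (\<tau> * norm u) + norm (shift k - \<tau> *\<^sub>R v)"
    using norm_triangle_ineq linearization_error_le[of z k] small z
    by (smt (verit, best) \<tau>_def)
  moreover have "\<epsilon> k * norm (z - xt k) \<le> \<epsilon> k * (\<tau> * norm u + norm (xt k - xb))"
    using norm_triangle_ineq4[of "z - xb" "xt k - xb"] z eps_pos[of k] by (intro mult_left_mono) auto
  ultimately show ?thesis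
    by (simp add: w_def \<tau>_def)
qed

lemma gap_ratio_le_shift_dir: "gap_ratio k \<le> norm (shift_dir k) + \<epsilon> k"
proof -
  have "gap k \<le> norm (shift k) + \<epsilon> k * norm (xt k - xb)"
    using gap_le_first_order[of k 0 0] delta_pos[of k] base_in_C by (simp add: infdist_zero)
  then have "gap_ratio k \<le> (norm (shift k) + \<epsilon> k * norm (xt k - xb)) / scale k"
    using scale_pos[of k] by (simp add: gap_ratio_def divide_right_mono)
  also have "\<dots> = norm (shift_dir k) + \<epsilon> k * (norm (xt k - xb) / scale k)"
    using scale_pos[of k] by (simp add: shift_dir_def divide_inverse_commute algebra_simps)
  also have "\<dots> \<le> norm (shift_dir k) + \<epsilon> k"
    using mult_left_le[OF xt_dist_div_scale_le_1 less_imp_le[OF eps_pos], of k k] by simp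
  finally show ?thesis .
qed

lemma norm_shift_mult_less_delta:
  assumes "\<epsilon> k * norm u \<le> 1"
  shows "norm (shift k) * norm u < \<delta> k"
proof (cases "u = 0")
  case False
  then have "norm (shift k) * norm u < \<epsilon> k * \<delta> k * norm u"
    using norm_shift_less(2)[of k] by simp
  also have "\<dots> \<le> \<delta> k"
    using assms delta_pos[of k] by (simp add: mult_left_le mult.commute mult.left_commute)
  finally show ?thesis .
qed (use delta_pos in simp)

lemma gap_ratio_le_first_order:
  assumes "shift k \<noteq> 0" and "\<epsilon> k * norm u \<le> 1"
  shows "gap_ratio k \<le> infdist (g pb xb + norm (shift k) *\<^sub>R (v + pjac g pb xb *v u)) C / norm (shift k)
    + real CARD('l) * real CARD('n) * \<epsilon> k * norm u + norm (sgn (shift k) - v) + \<epsilon> k * (norm u + 1)"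
proof -
  define \<tau> where "\<tau> = norm (shift k)"
  define Q where "Q = infdist (g pb xb + \<tau> *\<^sub>R (v + pjac g pb xb *v u)) C / \<tau>
    + real CARD('l) * real CARD('n) * \<epsilon> k * norm u + norm (sgn (shift k) - v)"
  have \<tau>: "0 < \<tau>"
    using assms(1) by (simp add: \<tau>_def)
  have "\<tau> * norm u < \<delta> k"
    using norm_shift_mult_less_delta[OF assms(2)] by (simp add: \<tau>_def)
  moreover have "shift k - \<tau> *\<^sub>R v = \<tau> *\<^sub>R (sgn (shift k) - v)"
    by (metis scaleR_diff_right scaleR_norm_sgn \<tau>_def)
  then have "norm (shift k - \<tau> *\<^sub>R v) = \<tau> * norm (sgn (shift k) - v)"
    using \<tau>(1) by simp
  moreover have "\<tau> * Q = infdist (g pb xb + \<tau> *\<^sub>R (v + pjac g pb xb *v u)) C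
      + real CARD('l) * real CARD('n) * \<epsilon> k * (\<tau> * norm u) + \<tau> * norm (sgn (shift k) - v)"
    using \<tau>(1) by (simp add: Q_def field_simps)
  ultimately have "gap k \<le> \<tau> * Q + \<epsilon> k * (\<tau> * norm u + norm (xt k - xb))"
    using gap_le_first_order[of k u v, folded \<tau>_def] by linarith
  then have "gap_ratio k \<le> (\<tau> * Q + \<epsilon> k * (\<tau> * norm u + norm (xt k - xb))) / scale k"
    using scale_pos[of k] by (simp add: gap_ratio_def divide_right_mono)
  also have "\<dots> = (\<tau> / scale k) * Q + \<epsilon> k * ((\<tau> / scale k) * norm u + norm (xt k - xb) / scale k)"
    by (simp add: add_divide_distrib algebra_simps)
  also have "\<dots> \<le> Q + \<epsilon> k * (norm u + 1)"
  proof -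
    have "0 \<le> Q"
      using \<tau>(1) eps_pos[of k] by (simp add: Q_def infdist_nonneg)
    moreover have "\<tau> / scale k \<le> 1" "norm (xt k - xb) / scale k \<le> 1"
      using shift_div_scale_le_1 xt_dist_div_scale_le_1 by (simp_all add: \<tau>_def)
    ultimately show ?thesis
      using \<tau>(1) scale_pos[of k] eps_pos[of k]
      by (intro add_mono mult_left_le_one_le mult_left_mono) (auto intro: mult_left_le_one_le)
  qed
  finally show ?thesis
    by (simp add: Q_def \<tau>_def)
qed

lemma sgn_shift_dir: "sgn (shift_dir k) = sgn (shift k)"
  using scale_pos[of k] by (simp add: shift_dir_def sgn_scaleR)

lemma shift_nonzero_eventually:
  assumes "(\<lambda>j. shift_dir (q j)) \<longlonglongrightarrow> v" and "v \<noteq> 0"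
  obtains N where "\<And>j. N \<le> j \<Longrightarrow> shift (q j) \<noteq> 0"
proof -
  have "\<forall>\<^sub>F j in sequentially. shift_dir (q j) \<noteq> 0"
    using tendsto_imp_eventually_ne[OF assms] .
  then show ?thesis
    using that scale_pos by (auto simp: eventually_sequentially shift_dir_def)
qed

lemma sgn_shift_limit_in_image_deriv_gen:
  assumes q: "strict_mono q" and nz: "\<And>j. shift (q j) \<noteq> 0"
    and lim: "(\<lambda>j. sgn (shift (q j))) \<longlonglongrightarrow> w"
  shows "w \<in> image_deriv_gen g \<zeta> pb xb"
  unfolding image_deriv_gen_def
proof (intro CollectI exI[of _ "\<lambda>j. pk (q j)"] conjI allI)
  fix j
  have "\<epsilon> (q j) \<le> 1 / real (Suc j)"
    using eps_le[of "q j"] seq_suble[OF q, of j] by (simp add: order_trans divide_left_mono)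
  then show "norm (g (pk (q j)) xb - g pb xb) < 1 / real (Suc j)"
    and "norm (pjac g (pk (q j)) xb - pjac g pb xb) < 1 / real (Suc j)"
    and "\<bar>\<zeta> (pk (q j)) - \<zeta> pb\<bar> < 1 / real (Suc j)"
    using norm_shift_less(1)[of "q j"] jacobian_near[of xb "q j"] zeta_near[of "q j"] delta_pos[of "q j"]
    by (auto simp: shift_def)
  show "g (pk (q j)) differentiable at xb"
    using has_derivative_near[of xb "q j"] delta_pos[of "q j"] by (auto intro: differentiableI)
  show "0 < norm (g (pk (q j)) xb - g pb xb)"
    using nz[of j] by (simp add: shift_def)
next
  show "(\<lambda>j. (1 / norm (g (pk (q j)) xb - g pb xb)) *\<^sub>R (g (pk (q j)) xb - g pb xb)) \<longlonglongrightarrow> w"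
    using lim by (simp add: shift_def sgn_div_norm divide_inverse_commute)
qed

lemma sgn_shift_dir_limit_in_image_deriv:
  assumes q: "strict_mono q" and lim: "(\<lambda>j. shift_dir (q j)) \<longlonglongrightarrow> v" and "v \<noteq> 0"
  shows "sgn v \<in> image_deriv g \<zeta> pb xb"
proof -
  obtain N where N: "\<And>j. N \<le> j \<Longrightarrow> shift (q j) \<noteq> 0"
    using shift_nonzero_eventually[OF lim \<open>v \<noteq> 0\<close>] by blast
  have "(\<lambda>j. sgn (shift (q j))) \<longlonglongrightarrow> sgn v"
    using tendsto_sgn[OF lim \<open>v \<noteq> 0\<close>] by (simp add: sgn_shift_dir)
  then have "(\<lambda>j. sgn (shift (q (j + N)))) \<longlonglongrightarrow> sgn v"
    by (rule LIMSEQ_ignore_initial_segment)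
  moreover have "strict_mono (\<lambda>j. q (j + N))"
    using q by (simp add: strict_mono_def)
  ultimately have "sgn v \<in> image_deriv_gen g \<zeta> pb xb"
    using N by (intro sgn_shift_limit_in_image_deriv_gen) auto
  then show ?thesis
    by (rule subsetD[OF image_deriv_gen_subset])
qed

lemma shift_dir_limit_in_image_deriv:
  assumes "strict_mono q" and "(\<lambda>j. shift_dir (q j)) \<longlonglongrightarrow> v"
  shows "v \<in> image_deriv g \<zeta> pb xb"
proof (cases "v = 0")
  case False
  then show ?thesis
    using image_deriv_scaleR[OF sgn_shift_dir_limit_in_image_deriv[OF assms False], of "norm v"]
    by (simp add: scaleR_norm_sgn)
qed (simp add: zero_in_image_deriv)

lemma eps_subseq_tendsto_zero: "strict_mono q \<Longrightarrow> (\<lambda>j. \<epsilon> (q j)) \<longlonglongrightarrow> 0"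
  using LIMSEQ_subseq_LIMSEQ[OF eps_tendsto_zero] by (simp add: o_def)

lemma gap_ratio_tendsto_zero_if_shift_dir_tendsto_zero:
  assumes q: "strict_mono q" and lim: "(\<lambda>j. shift_dir (q j)) \<longlonglongrightarrow> 0"
  shows "(\<lambda>j. gap_ratio (q j)) \<longlonglongrightarrow> 0"
proof (rule tendsto_of_norm_diff_le)
  show "\<forall>\<^sub>F j in sequentially. norm (gap_ratio (q j) - 0) \<le> norm (shift_dir (q j)) + \<epsilon> (q j)"
    using gap_ratio_le_shift_dir gap_ratio_nonneg by simp
  show "(\<lambda>j. norm (shift_dir (q j)) + \<epsilon> (q j)) \<longlonglongrightarrow> 0"
    using tendsto_add[OF tendsto_norm[OF lim] eps_subseq_tendsto_zero[OF q]] by simp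
qed

lemma gap_ratio_tendsto_zero_first_order:
  assumes q: "strict_mono q" and nz: "\<And>j. shift (q j) \<noteq> 0"
    and sgn: "(\<lambda>j. sgn (shift (q j))) \<longlonglongrightarrow> w"
    and first_order:
      "(\<lambda>j. infdist (g pb xb + norm (shift (q j)) *\<^sub>R (w + pjac g pb xb *v u)) C / norm (shift (q j)))
        \<longlonglongrightarrow> 0"
  shows "(\<lambda>j. gap_ratio (q j)) \<longlonglongrightarrow> 0"
proof -
  define bound where "bound j =
    infdist (g pb xb + norm (shift (q j)) *\<^sub>R (w + pjac g pb xb *v u)) C / norm (shift (q j))
    + real CARD('l) * real CARD('n) * \<epsilon> (q j) * norm u
    + norm (sgn (shift (q j)) - w) + \<epsilon> (q j) * (norm u + 1)" for j
  have eps: "(\<lambda>j. \<epsilon> (q j)) \<longlonglongrightarrow> 0"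
    by (rule eps_subseq_tendsto_zero[OF q])
  have "\<forall>\<^sub>F j in sequentially. \<epsilon> (q j) * norm u < 1"
    using order_tendstoD(2)[OF tendsto_mult_left_zero[OF eps, of "norm u"]] by simp
  then have "\<forall>\<^sub>F j in sequentially. norm (gap_ratio (q j) - 0) \<le> bound j"
    by (rule eventually_mono)
       (use gap_ratio_le_first_order[OF nz] gap_ratio_nonneg in \<open>simp add: bound_def\<close>)
  moreover have "bound \<longlonglongrightarrow> 0 + real CARD('l) * real CARD('n) * 0 * norm u + 0 + 0 * (norm u + 1)"
    unfolding bound_def
    by (intro tendsto_intros first_order eps tendsto_norm_zero) (use sgn in \<open>simp add: LIM_zero_iff\<close>)
  then have "bound \<longlonglongrightarrow> 0"
    by simp
  ultimately show ?thesis
    by (rule tendsto_of_norm_diff_le)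
qed

text \<open>For \<open>v \<noteq> 0\<close> the first assumption of the theorem is applied to \<open>sgn v \<in> D\<close> and the step sizes
  \<open>t\<^sub>j = |shift (q j)|\<close>; for \<open>v = 0\<close> the Ekeland inequality at \<open>xb\<close> suffices.\<close>
lemma gap_ratio_subseq_tendsto_zero:
  assumes A1: "\<forall>v \<in> image_deriv g \<zeta> pb xb. \<forall>t :: nat \<Rightarrow> real.
               (\<forall>k. 0 < t k) \<and> t \<longlonglongrightarrow> 0 \<longrightarrow>
               (\<exists>u :: real^'n. liminf (\<lambda>k. ereal (infdist (g pb xb + t k *\<^sub>R (v + pjac g pb xb *v u)) C / t k)) = 0)"
    and q: "strict_mono q" and lim: "(\<lambda>j. shift_dir (q j)) \<longlonglongrightarrow> v"
  obtains \<sigma> where "strict_mono \<sigma>" "(\<lambda>j. gap_ratio (q (\<sigma> j))) \<longlonglongrightarrow> 0"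
proof (cases "v = 0")
  case True
  then show ?thesis
    using that[of id] gap_ratio_tendsto_zero_if_shift_dir_tendsto_zero[OF q] lim
    by (simp add: strict_mono_def)
next
  case False
  obtain N where N: "\<And>j. N \<le> j \<Longrightarrow> shift (q j) \<noteq> 0"
    using shift_nonzero_eventually[OF lim False] by blast
  define t where "t j = norm (shift (q (j + N)))" for j
  have "\<forall>j. 0 < t j"
    using N by (simp add: t_def)
  moreover have "t \<longlonglongrightarrow> 0"
  proof (rule tendsto_of_norm_diff_le)
    show "\<forall>\<^sub>F j in sequentially. norm (t j - 0) \<le> \<epsilon> (q (j + N))"
      using norm_shift_less(1) by (simp add: t_def less_imp_le)
  qed (rule LIMSEQ_ignore_initial_segment[OF eps_subseq_tendsto_zero[OF q]])
  moreover have "sgn v \<in> image_deriv g \<zeta> pb xb"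
    by (rule sgn_shift_dir_limit_in_image_deriv[OF q lim False])
  ultimately obtain u where
    "liminf (\<lambda>j. ereal (infdist (g pb xb + t j *\<^sub>R (sgn v + pjac g pb xb *v u)) C / t j)) = 0"
    using A1 by blast
  then obtain \<sigma>' where \<sigma>': "strict_mono \<sigma>'"
    and X: "(\<lambda>j. infdist (g pb xb + t (\<sigma>' j) *\<^sub>R (sgn v + pjac g pb xb *v u)) C / t (\<sigma>' j)) \<longlonglongrightarrow> 0"
    by (auto elim!: liminf_eq_zero_imp_subseq simp: o_def)
  define \<sigma> where "\<sigma> j = \<sigma>' j + N" for j
  have \<sigma>: "strict_mono \<sigma>"
    using \<sigma>' by (simp add: strict_mono_def \<sigma>_def)
  have "(\<lambda>j. sgn (shift (q j))) \<longlonglongrightarrow> sgn v"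
    using tendsto_sgn[OF lim False] by (simp add: sgn_shift_dir)
  then have "(\<lambda>j. sgn (shift (q (\<sigma> j)))) \<longlonglongrightarrow> sgn v"
    using LIMSEQ_subseq_LIMSEQ[OF _ \<sigma>] by (simp add: o_def)
  moreover have "strict_mono (\<lambda>j. q (\<sigma> j))"
    using strict_mono_o[OF q \<sigma>] by (simp add: o_def)
  ultimately have "(\<lambda>j. gap_ratio (q (\<sigma> j))) \<longlonglongrightarrow> 0"
    using N X
    by (intro gap_ratio_tendsto_zero_first_order[where u=u]) (simp_all add: \<sigma>_def t_def)
  with \<sigma> show ?thesis
    by (rule that)
qed

lemma nearest_point_quotient_tendsto:
  assumes q: "strict_mono q"
    and v: "(\<lambda>j. shift_dir (q j)) \<longlonglongrightarrow> v" and u: "(\<lambda>j. xt_dir (q j)) \<longlonglongrightarrow> u"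
    and y: "(\<lambda>j. normal (q j)) \<longlonglongrightarrow> y" and gap: "(\<lambda>j. gap_ratio (q j)) \<longlonglongrightarrow> 0"
  shows "(\<lambda>j. (cc (q j) - g pb xb) /\<^sub>R scale (q j)) \<longlonglongrightarrow> v + pjac g pb xb *v u"
proof -
  define w where "w j = shift_dir (q j) + pjac g pb xb *v xt_dir (q j) - gap_ratio (q j) *\<^sub>R normal (q j)"
    for j
  have "w \<longlonglongrightarrow> v + pjac g pb xb *v u - 0 *\<^sub>R y"
    unfolding w_def by (intro tendsto_intros v tendsto_matrix_vector_mult[OF tendsto_const u] gap y)
  moreover have "(\<lambda>j. (cc (q j) - g pb xb) /\<^sub>R scale (q j) - w j) \<longlonglongrightarrow> 0"
  proof (rule tendsto_of_norm_diff_le)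
    show "\<forall>\<^sub>F j in sequentially.
        norm ((cc (q j) - g pb xb) /\<^sub>R scale (q j) - w j - 0) \<le> real CARD('l) * real CARD('n) * \<epsilon> (q j)"
      using nearest_point_expansion by (simp add: w_def)
    show "(\<lambda>j. real CARD('l) * real CARD('n) * \<epsilon> (q j)) \<longlonglongrightarrow> 0"
      using tendsto_mult_right_zero[OF eps_subseq_tendsto_zero[OF q]] by simp
  qed
  ultimately show ?thesis
    using Lim_transform by fastforce
qed

text \<open>Since \<open>cc (q j) = g pb xb + scale (q j) * w\<^sub>j\<close> with \<open>w\<^sub>j \<rightarrow> v + \<nabla>\<^sub>xg u\<close>, the nearest points
  exhibit \<open>v + \<nabla>\<^sub>xg u\<close> as a tangent direction and \<open>y\<close> as a directional limiting normal.\<close>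
lemma limiting_multiplier:
  assumes q: "strict_mono q"
    and v: "(\<lambda>j. shift_dir (q j)) \<longlonglongrightarrow> v" and u: "(\<lambda>j. xt_dir (q j)) \<longlonglongrightarrow> u"
    and y: "(\<lambda>j. normal (q j)) \<longlonglongrightarrow> y" and gap: "(\<lambda>j. gap_ratio (q j)) \<longlonglongrightarrow> 0"
  shows "(v, u) \<noteq> (0, 0)"
    and "v + pjac g pb xb *v u \<in> tangent_cone C (g pb xb)"
    and "y \<in> dir_normal_cone C (g pb xb) (v + pjac g pb xb *v u)"
    and "transpose (pjac g pb xb) *v y = 0"
    and "norm y = 1"
proof -
  have "(\<lambda>j. norm (shift_dir (q j)) + norm (xt_dir (q j)) + gap_ratio (q j)) \<longlonglongrightarrow> norm v + norm u + 0"
    by (intro tendsto_intros v u gap)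
  moreover have "(\<lambda>j. norm (shift_dir (q j)) + norm (xt_dir (q j)) + gap_ratio (q j)) \<longlonglongrightarrow> 1"
    by (simp add: norm_dirs_sum)
  ultimately have "norm v + norm u = 1"
    using LIMSEQ_unique by simp
  then show "(v, u) \<noteq> (0, 0)"
    by auto
  show "norm y = 1"
    using LIMSEQ_unique[OF tendsto_norm[OF y]] by (simp add: norm_normal)
  define w where "w j = (cc (q j) - g pb xb) /\<^sub>R scale (q j)" for j
  have w: "w \<longlonglongrightarrow> v + pjac g pb xb *v u"
    unfolding w_def by (rule nearest_point_quotient_tendsto[OF q v u y gap])
  have scale: "\<And>j. 0 < scale (q j)" "(\<lambda>j. scale (q j)) \<longlonglongrightarrow> 0"
    using scale_pos LIMSEQ_subseq_LIMSEQ[OF scale_tendsto_zero q] by (simp_all add: o_def)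
  have cc_eq: "cc (q j) = g pb xb + scale (q j) *\<^sub>R w j" for j
    using scale_pos[of "q j"] by (simp add: w_def)
  show "v + pjac g pb xb *v u \<in> tangent_cone C (g pb xb)"
    unfolding tangent_cone_def
    by (intro CollectI exI[of _ "\<lambda>j. scale (q j)"] exI[of _ w] conjI allI scale w)
       (metis cc_eq cc_in_C)
  show "y \<in> dir_normal_cone C (g pb xb) (v + pjac g pb xb *v u)"
    unfolding dir_normal_cone_def
    by (intro CollectI exI[of _ "\<lambda>j. scale (q j)"] exI[of _ w] exI[of _ "\<lambda>j. normal (q j)"]
        conjI allI scale w y)
       (metis cc_eq cc_in_C normal_in_regular_normal_cone)+
  have "(\<lambda>j. transpose (pjac g (pk (q j)) (xt (q j))) *v normal (q j)) \<longlonglongrightarrow> transpose (pjac g pb xb) *v y"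
    using LIMSEQ_subseq_LIMSEQ[OF jacobian_xt_tendsto q]
    by (intro tendsto_matrix_vector_mult tendsto_transpose y) (simp add: o_def)
  moreover have "(\<lambda>j. transpose (pjac g (pk (q j)) (xt (q j))) *v normal (q j)) \<longlonglongrightarrow> 0"
    by (rule tendsto_of_norm_diff_le[OF _ eps_subseq_tendsto_zero[OF q]])
       (use norm_transpose_jacobian_normal_le in simp)
  ultimately show "transpose (pjac g pb xb) *v y = 0"
    by (rule LIMSEQ_unique)
qed

lemma normalised_data_convergent_subseq:
  obtains r y v u where "strict_mono r" "(\<lambda>j. normal (r j)) \<longlonglongrightarrow> y"
    "(\<lambda>j. shift_dir (r j)) \<longlonglongrightarrow> v" "(\<lambda>j. xt_dir (r j)) \<longlonglongrightarrow> u"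
proof -
  define T where "T k = (normal k, shift_dir k, xt_dir k)" for k
  have "norm (T k) \<le> 3" for k
  proof -
    have "norm (T k) \<le> norm (normal k) + (norm (shift_dir k) + norm (xt_dir k))"
      unfolding T_def by (meson add_left_mono norm_Pair_le order_trans)
    then show ?thesis
      using norm_normal[of k] norm_dirs_sum[of k] gap_ratio_nonneg[of k] by linarith
  qed
  then have "bounded (range T)"
    by (auto intro: boundedI)
  then obtain r L where r: "strict_mono r" and "(T \<circ> r) \<longlonglongrightarrow> L"
    using bounded_imp_convergent_subsequence by blast
  then have TL: "(\<lambda>j. T (r j)) \<longlonglongrightarrow> L"
    by (simp add: o_def)
  show ?thesis
  proof (rule that[OF r])
    show "(\<lambda>j. normal (r j)) \<longlonglongrightarrow> fst L"
      using tendsto_fst[OF TL] by (simp add: T_def)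
    show "(\<lambda>j. shift_dir (r j)) \<longlonglongrightarrow> fst (snd L)"
      using tendsto_fst[OF tendsto_snd[OF TL]] by (simp add: T_def)
    show "(\<lambda>j. xt_dir (r j)) \<longlonglongrightarrow> snd (snd L)"
      using tendsto_snd[OF tendsto_snd[OF TL]] by (simp add: T_def)
  qed
qed

lemma no_approx_violations:
  assumes A1: "\<forall>v \<in> image_deriv g \<zeta> pb xb. \<forall>t :: nat \<Rightarrow> real.
               (\<forall>k. 0 < t k) \<and> t \<longlonglongrightarrow> 0 \<longrightarrow>
               (\<exists>u :: real^'n. liminf (\<lambda>k. ereal (infdist (g pb xb + t k *\<^sub>R (v + pjac g pb xb *v u)) C / t k)) = 0)"
    and A2: "\<forall>v \<in> image_deriv g \<zeta> pb xb. \<forall>u :: real^'n.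
               (v, u) \<noteq> (0, 0) \<and> v + pjac g pb xb *v u \<in> tangent_cone C (g pb xb) \<longrightarrow>
               (\<forall>y. y \<in> dir_normal_cone C (g pb xb) (v + pjac g pb xb *v u) \<and>
                    transpose (pjac g pb xb) *v y = 0 \<longrightarrow> y = 0)"
  shows False
proof -
  obtain r y v u where r: "strict_mono r" and y: "(\<lambda>j. normal (r j)) \<longlonglongrightarrow> y"
    and v: "(\<lambda>j. shift_dir (r j)) \<longlonglongrightarrow> v" and u: "(\<lambda>j. xt_dir (r j)) \<longlonglongrightarrow> u"
    using normalised_data_convergent_subseq by blast
  obtain \<sigma> where \<sigma>: "strict_mono \<sigma>" and gap: "(\<lambda>j. gap_ratio (r (\<sigma> j))) \<longlonglongrightarrow> 0"
    using gap_ratio_subseq_tendsto_zero[OF A1 r v] by blast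
  have q: "strict_mono (\<lambda>j. r (\<sigma> j))"
    using strict_mono_o[OF r \<sigma>] by (simp add: o_def)
  have lims: "(\<lambda>j. shift_dir (r (\<sigma> j))) \<longlonglongrightarrow> v" "(\<lambda>j. xt_dir (r (\<sigma> j))) \<longlonglongrightarrow> u"
    "(\<lambda>j. normal (r (\<sigma> j))) \<longlonglongrightarrow> y"
    using LIMSEQ_subseq_LIMSEQ[OF v \<sigma>] LIMSEQ_subseq_LIMSEQ[OF u \<sigma>] LIMSEQ_subseq_LIMSEQ[OF y \<sigma>]
    by (simp_all add: o_def)
  note multiplier = limiting_multiplier[OF q lims gap]
  have "v \<in> image_deriv g \<zeta> pb xb"
    using shift_dir_limit_in_image_deriv[OF r v] .
  with A2 multiplier(1,2)
  have "\<forall>y. y \<in> dir_normal_cone C (g pb xb) (v + pjac g pb xb *v u) \<and>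
      transpose (pjac g pb xb) *v y = 0 \<longrightarrow> y = 0"
    by blast
  with multiplier(3,4) have "y = 0"
    by blast
  with multiplier(5) show False
    by simp
qed

end

theorem corollary3p6:
  fixes g :: "'p::topological_space \<Rightarrow> real^'n \<Rightarrow> real^'l"
    and C :: "(real^'l) set"
    and \<zeta> :: "'p \<Rightarrow> real"
    and pb :: 'p and xb :: "real^'n"
  assumes C_closed: "closed C"
    and standing: "standing_assumptions g pb xb"
    and gph: "xb \<in> Gam g C pb"
    and zeta_cont: "(\<zeta> \<longlongrightarrow> \<zeta> pb) (at pb)"
    and A1: "\<forall>v \<in> image_deriv g \<zeta> pb xb. \<forall>t :: nat \<Rightarrow> real.
               (\<forall>k. 0 < t k) \<and> t \<longlonglongrightarrow> 0 \<longrightarrow>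
               (\<exists>u :: real^'n. liminf (\<lambda>k. ereal (infdist (g pb xb + t k *\<^sub>R (v + pjac g pb xb *v u)) C / t k)) = 0)"
    and A2: "\<forall>v \<in> image_deriv g \<zeta> pb xb. \<forall>u :: real^'n.
               (v, u) \<noteq> (0, 0) \<and> v + pjac g pb xb *v u \<in> tangent_cone C (g pb xb) \<longrightarrow>
               (\<forall>y. y \<in> dir_normal_cone C (g pb xb) (v + pjac g pb xb *v u) \<and>
                    transpose (pjac g pb xb) *v y = 0 \<longrightarrow> y = 0)"
  shows "robinson_stable g C pb xb"
proof (rule ccontr)
  assume not_stable: "\<not> robinson_stable g C pb xb"
  have base_in_C: "g pb xb \<in> C"
    using gph by (simp add: Gam_def)
  have "\<forall>k. \<exists>p x c \<delta>. approx_violation g C \<zeta> pb xb (1 / real (Suc k)) p x c \<delta>"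
    using approx_violation_exists[OF C_closed standing base_in_C zeta_cont not_stable] by simp
  then obtain pk xt cc \<delta>
    where "\<And>k. approx_violation g C \<zeta> pb xb (1 / real (Suc k)) (pk k) (xt k) (cc k) (\<delta> k)"
    by metis
  then interpret approx_violations g C \<zeta> pb xb "\<lambda>k. 1 / real (Suc k)" pk xt cc \<delta>
    using base_in_C by unfold_locales auto
  show False
    using no_approx_violations A1 A2 by blast
qed

end
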